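(* Let $\alpha>0$. The equation $e^{2\sigma}=\alpha\sigma+\frac12$ has infinitely many roots $\sigma\in\mathbb{C}$, and their real parts are unbounded above: there is a sequence of roots $\sigma_k$ with $\Im(\sigma_k)\to+\infty$ and $\Re(\sigma_k)-\frac12\ln k$ bounded as $k\to\infty$; in particular $\Re(\sigma_k)\to+\infty$.
   Context: This is the dispersion relation of the square-wave limit ($\beta\to0$) of the model equation $u_t+\frac12(u^2-u\,u(0^-,t))_x=f(x,u(0^-,t))$ with the shifted-Gaussian source whose peak location is $-u(0^-,t)^{-\alpha}$; its roots with positive real part are the eigenvalues of the linearized problem in that limit. *)

theory Defs
  imports "HOL-Analysis.Analysis"
begin

end

theory Submission
  imports Defs "HOL-Real_Asymp.Real_Asymp"
begin

text \<open>Put \<open>z = 2\<sigma>\<close> and \<open>c = \<alpha>/2\<close>, so the equation reads \<open>exp z = c z + 1/2\<close>. On the square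
  \<open>[0, L] \<times> [2\<pi>n, L]\<close> with \<open>L = 2\<pi>n + \<pi>\<close>, the modulus of \<open>c z + 1/2\<close> lies between \<open>2c\<pi>n\<close> and
  \<open>2cL + 1/2\<close>, and its argument lies in \<open>(0, \<pi>)\<close>. For large \<open>n\<close> this makes the branch
  \<open>z \<mapsto> Ln (c z + 1/2) + 2\<pi>in\<close> of the inverse of \<open>exp\<close> a continuous self-map of the square, and a
  Brouwer fixed point is a root with \<open>Im z \<ge> 2\<pi>n\<close> and \<open>Re z = ln \<bar>c z + 1/2\<bar> = ln n + O(1)\<close>.\<close>

lemma ln_norm_affine_bounds_on_box:
  fixes c y0 L :: real and z :: complex
  assumes c: "0 < c" and y0: "1 \<le> c * y0"
    and z: "0 \<le> Re z" "Re z \<le> L" "y0 \<le> Im z" "Im z \<le> L"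
  shows "0 < Im (of_real c * z + 1/2)"
    and "ln (c * y0) \<le> ln (cmod (of_real c * z + 1/2))"
    and "ln (cmod (of_real c * z + 1/2)) \<le> ln (2*c*L + 1/2)"
proof -
  have "0 < c * y0" using y0 by linarith
  then have "0 < y0" using c by (simp add: zero_less_mult_iff)
  have Im_lower: "c * y0 \<le> Im (of_real c * z + 1/2)"
    using c z by (simp add: mult_left_mono)
  then show "0 < Im (of_real c * z + 1/2)"
    using y0 by linarith
  have norm_lower: "c * y0 \<le> cmod (of_real c * z + 1/2)"
    using Im_lower abs_Im_le_cmod[of "of_real c * z + 1/2"] by linarith
  have "cmod (of_real c * z + 1/2) \<le> c * cmod z + 1/2"
    using norm_triangle_ineq[of "of_real c * z" "1/2"] c by (simp add: norm_mult)
  also have "c * cmod z \<le> c * (2*L)"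
    using cmod_le[of z] c z \<open>0 < y0\<close> by (intro mult_left_mono) auto
  finally have norm_upper: "cmod (of_real c * z + 1/2) \<le> 2*c*L + 1/2" by simp
  show "ln (c * y0) \<le> ln (cmod (of_real c * z + 1/2))"
    using norm_lower \<open>0 < c * y0\<close> by (rule ln_mono)
  show "ln (cmod (of_real c * z + 1/2)) \<le> ln (2*c*L + 1/2)"
    using norm_upper by (rule ln_mono) (use norm_lower \<open>0 < c * y0\<close> in linarith)
qed

lemma Ln_affine_branch_maps_box:
  fixes c :: real and n :: nat and z :: complex
  defines "L \<equiv> 2*pi*n + pi"
  assumes c: "0 < c" and lower: "1 \<le> 2*c*pi*n" and upper: "ln (2*c*L + 1/2) \<le> L"
    and z: "z \<in> cbox (Complex 0 (2*pi*n)) (Complex L L)"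
  shows "Ln (of_real c * z + 1/2) + \<i> * of_real (2*pi*n) \<in> cbox (Complex 0 (2*pi*n)) (Complex L L)"
proof -
  define w where "w = of_real c * z + 1/2"
  have "0 < Im w" "ln (2*c*pi*n) \<le> ln (cmod w)" "ln (cmod w) \<le> ln (2*c*L + 1/2)"
    using ln_norm_affine_bounds_on_box[of c "2*pi*n" z L] c lower z
    unfolding w_def by (auto simp: cbox_complex_eq mult_ac)
  moreover have "0 \<le> ln (2*c*pi*n)"
    using lower by simp
  moreover have "Re (Ln w) = ln (cmod w)"
    using \<open>0 < Im w\<close> by (auto intro: Re_Ln)
  ultimately show ?thesis
    using Im_Ln_pos_lt_imp[of w] upper unfolding w_def[symmetric]
    by (auto simp: cbox_complex_eq L_def)
qed

lemma exp_eq_affine_has_root_in_box: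
  fixes c :: real and n :: nat
  defines "L \<equiv> 2*pi*n + pi"
  assumes c: "0 < c" and lower: "1 \<le> 2*c*pi*n" and upper: "ln (2*c*L + 1/2) \<le> L"
  shows "\<exists>z. exp z = of_real c * z + 1/2 \<and> 2*pi*n \<le> Im z
           \<and> ln (2*c*pi*n) \<le> Re z \<and> Re z \<le> ln (2*c*L + 1/2)"
proof -
  define S where "S = cbox (Complex 0 (2*pi*n)) (Complex L L)"
  define W :: "complex \<Rightarrow> complex" where "W z = of_real c * z + 1/2" for z
  define T :: "complex \<Rightarrow> complex" where "T z = Ln (W z) + \<i> * of_real (2*pi*n)" for z
  have memS: "z \<in> S \<longleftrightarrow> 0 \<le> Re z \<and> Re z \<le> L \<and> 2*pi*n \<le> Im z \<and> Im z \<le> L" for z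
    by (auto simp: S_def cbox_complex_eq)
  have W_bounds: "0 < Im (W z) \<and> ln (2*c*pi*n) \<le> ln (cmod (W z)) \<and> ln (cmod (W z)) \<le> ln (2*c*L + 1/2)"
    if "z \<in> S" for z
    using ln_norm_affine_bounds_on_box[of c "2*pi*n" z L] that c lower
    unfolding memS W_def by (simp add: mult_ac)
  have "continuous_on S T"
    unfolding T_def W_def
  proof (intro continuous_intros ballI)
    show "of_real c * z + 1/2 \<notin> \<real>\<^sub>\<le>\<^sub>0" if "z \<in> S" for z
      using W_bounds[OF that] by (auto simp: W_def complex_nonpos_Reals_iff)
  qed
  moreover have "T ` S \<subseteq> S"
    using Ln_affine_branch_maps_box[OF c lower upper[unfolded L_def]]
    unfolding S_def T_def W_def L_def by blast
  moreover have "S \<noteq> {}" "compact S" "convex S"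
    using memS[of "Complex 0 (2*pi*n)"] by (auto simp: S_def L_def)
  ultimately obtain z where z: "z \<in> S" "T z = z"
    using brouwer[of S T] by blast
  have W_nonzero: "W z \<noteq> 0"
    using W_bounds[OF z(1)] by auto
  have "exp z = exp (Ln (W z)) * exp (\<i> * of_real (2*pi*n))"
    using z(2) by (metis T_def exp_add)
  also have "\<dots> = W z"
    using W_nonzero exp_integer_2pi[of "of_nat n"] by (simp add: mult_ac)
  finally have "exp z = W z" .
  moreover have "Re z = ln (cmod (W z))"
    using W_nonzero arg_cong[OF z(2), of Re] by (simp add: T_def)
  moreover have "2*pi*n \<le> Im z"
    using z(1) unfolding memS by blast
  ultimately show ?thesis
    using W_bounds[OF z(1)] unfolding W_def by auto
qed

lemma eventually_root_with_log_bounds: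
  fixes \<alpha> :: real
  assumes \<alpha>: "0 < \<alpha>"
  shows "\<forall>\<^sub>F n in sequentially. \<exists>w. exp (2*w) = of_real \<alpha> * w + 1/2 \<and> pi * real n \<le> Im w
           \<and> ln (\<alpha>*pi*real n) \<le> 2 * Re w \<and> 2 * Re w \<le> ln ((3*\<alpha>*pi + 1/2) * real n)"
proof -
  have "\<forall>\<^sub>F n in sequentially. 1 \<le> \<alpha>*pi*real n \<and> 1 \<le> real n
          \<and> ln (\<alpha>*(2*pi*real n + pi) + 1/2) \<le> 2*pi*real n + pi"
    using \<alpha> by (intro eventually_conj; real_asymp)
  then show ?thesis
  proof (rule eventually_mono)
    fix n :: nat
    assume n: "1 \<le> \<alpha>*pi*real n \<and> 1 \<le> real n \<and> ln (\<alpha>*(2*pi*real n + pi) + 1/2) \<le> 2*pi*real n + pi"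
    have "\<exists>z. exp z = of_real (\<alpha>/2) * z + 1/2 \<and> 2*pi*n \<le> Im z
        \<and> ln (\<alpha>*pi*n) \<le> Re z \<and> Re z \<le> ln (\<alpha>*(2*pi*n + pi) + 1/2)"
      using exp_eq_affine_has_root_in_box[of "\<alpha>/2" n] n \<alpha> by simp
    then obtain z where z: "exp z = of_real (\<alpha>/2) * z + 1/2" "2*pi*n \<le> Im z"
        "ln (\<alpha>*pi*n) \<le> Re z" "Re z \<le> ln (\<alpha>*(2*pi*n + pi) + 1/2)"
      by blast
    have "\<alpha>*pi \<le> \<alpha>*pi*n"
      using mult_left_mono[of 1 "real n" "\<alpha>*pi"] n \<alpha> by simp
    moreover have "\<alpha>*(2*pi*n + pi) + 1/2 = 2*(\<alpha>*pi*n) + \<alpha>*pi + 1/2"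
      and "(3*\<alpha>*pi + 1/2) * n = 3*(\<alpha>*pi*n) + n/2"
      by (simp_all add: algebra_simps)
    ultimately have "\<alpha>*(2*pi*n + pi) + 1/2 \<le> (3*\<alpha>*pi + 1/2) * n"
      using n by linarith
    moreover have "0 < \<alpha>*(2*pi*n + pi) + 1/2"
      using \<alpha> by (intro add_pos_pos mult_pos_pos add_nonneg_pos) auto
    ultimately have "ln (\<alpha>*(2*pi*n + pi) + 1/2) \<le> ln ((3*\<alpha>*pi + 1/2) * n)"
      by (rule ln_mono)
    moreover have "exp (2*(z/2)) = of_real \<alpha> * (z/2) + 1/2"
      using z(1) by (simp add: field_simps)
    ultimately show "\<exists>w. exp (2*w) = of_real \<alpha> * w + 1/2 \<and> pi * n \<le> Im w
           \<and> ln (\<alpha>*pi*n) \<le> 2 * Re w \<and> 2 * Re w \<le> ln ((3*\<alpha>*pi + 1/2) * n)"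
      using z(2-4) by (intro exI[of _ "z/2"]) auto
  qed
qed

lemma abs_half_ln_sub_le:
  fixes a b t x :: real
  assumes "0 < a" "0 < b" "0 < t" "ln (a*t) \<le> 2*x" "2*x \<le> ln (b*t)"
  shows "\<bar>x - ln t / 2\<bar> \<le> (\<bar>ln a\<bar> + \<bar>ln b\<bar>) / 2"
proof -
  have "ln a + ln t \<le> 2*x" "2*x \<le> ln b + ln t"
    using assms by (simp_all add: ln_mult)
  then show ?thesis
    by (auto simp: abs_le_iff abs_if)
qed

lemma ln_max_bounds:
  fixes k N :: nat
  assumes "1 \<le> k"
  shows "ln (real k) \<le> ln (real (max k N))" and "ln (real (max k N)) \<le> ln (real k) + ln (real N + 1)"
proof -
  show "ln (real k) \<le> ln (real (max k N))"
    using assms by simp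
  have "real (max k N) \<le> (real N + 1) * real k"
  proof -
    have "real (max k N) \<le> real k + real N * 1"
      by (simp add: max_def)
    also have "\<dots> \<le> real k + real N * real k"
      using assms by (intro add_left_mono mult_left_mono) auto
    finally show ?thesis
      by (simp add: algebra_simps)
  qed
  then have "ln (real (max k N)) \<le> ln ((real N + 1) * real k)"
    using assms by (intro ln_mono) auto
  then show "ln (real (max k N)) \<le> ln (real k) + ln (real N + 1)"
    using assms by (simp add: ln_mult)
qed

lemma filterlim_at_top_imp_infinite:
  fixes f :: "nat \<Rightarrow> 'a" and g :: "'a \<Rightarrow> real"
  assumes "range f \<subseteq> S" and "filterlim (\<lambda>k. g (f k)) at_top sequentially"
  shows "infinite S"
proof
  assume "finite S"
  then obtain M where M: "\<And>x. x \<in> S \<Longrightarrow> g x \<le> M"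
    by (metis bdd_above.E bdd_above_finite finite_imageI imageI)
  have "\<forall>\<^sub>F k in sequentially. M + 1 \<le> g (f k)"
    using assms(2) by (simp add: filterlim_at_top)
  then obtain k where "M + 1 \<le> g (f k)"
    by (metis eventually_sequentially order.refl)
  then show False
    using M[of "f k"] assms(1) by auto
qed

lemma root_sequence_with_log_real_parts:
  fixes \<alpha> :: real
  assumes "0 < \<alpha>"
  shows "\<exists>\<sigma>. (\<forall>k. exp (2 * \<sigma> k) = of_real \<alpha> * \<sigma> k + 1/2) \<and> (\<forall>k. pi * real k \<le> Im (\<sigma> k))
           \<and> (\<exists>B. \<forall>k\<ge>1. \<bar>Re (\<sigma> k) - ln (real k) / 2\<bar> \<le> B)"
proof -
  obtain N :: nat where "\<forall>n\<ge>N. \<exists>w. exp (2*w) = of_real \<alpha> * w + 1/2 \<and> pi * real n \<le> Im w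
           \<and> ln (\<alpha>*pi*real n) \<le> 2 * Re w \<and> 2 * Re w \<le> ln ((3*\<alpha>*pi + 1/2) * real n)"
    using eventually_root_with_log_bounds[OF assms] unfolding eventually_sequentially by blast
  then obtain \<rho> where \<rho>: "\<And>n. N \<le> n \<Longrightarrow> exp (2 * \<rho> n) = of_real \<alpha> * \<rho> n + 1/2
           \<and> pi * real n \<le> Im (\<rho> n) \<and> ln (\<alpha>*pi*real n) \<le> 2 * Re (\<rho> n)
           \<and> 2 * Re (\<rho> n) \<le> ln ((3*\<alpha>*pi + 1/2) * real n)"
    by metis
  define \<sigma> where "\<sigma> k = \<rho> (max k N)" for k
  define B where "B = (\<bar>ln (\<alpha>*pi)\<bar> + \<bar>ln (3*\<alpha>*pi + 1/2)\<bar>) / 2 + ln (real N + 1) / 2"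
  have "exp (2 * \<sigma> k) = of_real \<alpha> * \<sigma> k + 1/2" for k
    using \<rho>[of "max k N"] unfolding \<sigma>_def by simp
  moreover have "pi * real k \<le> Im (\<sigma> k)" for k
  proof -
    have "pi * real k \<le> pi * real (max k N)"
      by (intro mult_left_mono) auto
    also have "\<dots> \<le> Im (\<rho> (max k N))"
      using \<rho>[of "max k N"] by simp
    finally show ?thesis
      unfolding \<sigma>_def .
  qed
  moreover have "\<bar>Re (\<sigma> k) - ln (real k) / 2\<bar> \<le> B" if "1 \<le> k" for k
  proof -
    have "\<bar>Re (\<sigma> k) - ln (real (max k N)) / 2\<bar> \<le> (\<bar>ln (\<alpha>*pi)\<bar> + \<bar>ln (3*\<alpha>*pi + 1/2)\<bar>) / 2"
      using \<rho>[of "max k N"] that assms unfolding \<sigma>_def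
      by (intro abs_half_ln_sub_le) (auto intro: add_pos_nonneg)
    then show ?thesis
      using ln_max_bounds[OF that, of N] unfolding B_def by linarith
  qed
  ultimately show ?thesis
    by blast
qed

theorem mainTheorem6:
  fixes \<alpha> :: real
  assumes "\<alpha> > 0"
  shows "infinite {\<sigma>::complex. exp (2 * \<sigma>) = complex_of_real \<alpha> * \<sigma> + 1/2}
    \<and> (\<exists>\<sigma> :: nat \<Rightarrow> complex.
          (\<forall>k. exp (2 * \<sigma> k) = complex_of_real \<alpha> * \<sigma> k + 1/2)
        \<and> filterlim (\<lambda>k. Im (\<sigma> k)) at_top sequentially
        \<and> (\<exists>B. \<forall>k\<ge>1. \<bar>Re (\<sigma> k) - ln (real k) / 2\<bar> \<le> B)
        \<and> filterlim (\<lambda>k. Re (\<sigma> k)) at_top sequentially)"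
proof -
  obtain \<sigma> B where roots: "\<And>k. exp (2 * \<sigma> k) = complex_of_real \<alpha> * \<sigma> k + 1/2"
    and Im: "\<And>k. pi * real k \<le> Im (\<sigma> k)" and Re: "\<And>k. 1 \<le> k \<Longrightarrow> \<bar>Re (\<sigma> k) - ln (real k) / 2\<bar> \<le> B"
    using root_sequence_with_log_real_parts[OF assms] by blast
  have Im_lim: "filterlim (\<lambda>k. Im (\<sigma> k)) at_top sequentially"
  proof (rule filterlim_at_top_mono[OF _ always_eventually])
    show "filterlim (\<lambda>k::nat. pi * real k) at_top sequentially" by real_asymp
  qed (use Im in blast)
  have Re_lim: "filterlim (\<lambda>k. Re (\<sigma> k)) at_top sequentially"
  proof (rule filterlim_at_top_mono)
    show "filterlim (\<lambda>k::nat. ln (real k) / 2 - B) at_top sequentially" by real_asymp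
    have "ln (real k) / 2 - B \<le> Re (\<sigma> k)" if "1 \<le> k" for k
      using Re[OF that] unfolding abs_le_iff by linarith
    then show "\<forall>\<^sub>F k in sequentially. ln (real k) / 2 - B \<le> Re (\<sigma> k)"
      unfolding eventually_sequentially by blast
  qed
  have "infinite {\<sigma>::complex. exp (2 * \<sigma>) = complex_of_real \<alpha> * \<sigma> + 1/2}"
    using roots Im_lim by (intro filterlim_at_top_imp_infinite[of \<sigma> _ Im]) auto
  then show ?thesis
    using roots Im_lim Re_lim Re by blast
qed

end
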